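(* Let $R$ be a commutative ring and let $x\in R[[t]]$ admit a strict Weierstrass factorization. Then for every ring homomorphism $R\to R'$, the canonical map $$(R[[t]]/(x))\otimes_R R'\to R'[[t]]/(x)$$ is an isomorphism, where on the right $x$ denotes the image of $x$ in $R'[[t]]$.
   Context: A strict Weierstrass factorization of $x\in R[[t]]$ is an expression $x=uq$ with $u\in R[[t]]^\times$ and $q\in R[t]$ a monic polynomial such that $t^n\in qR[[t]]$ for some $n\in\mathbb{N}$. $(x)$ denotes the ideal generated by $x$. *)

theory Defs
  imports "HOL-Computational_Algebra.Computational_Algebra"
begin

definition is_ring_hom :: "('a::comm_ring_1 \<Rightarrow> 'b::comm_ring_1) \<Rightarrow> bool" where
  "is_ring_hom h \<longleftrightarrow> h 1 = 1 \<and> (\<forall>a b. h (a + b) = h a + h b) \<and> (\<forall>a b. h (a * b) = h a * h b)"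

definition fps_map :: "('a \<Rightarrow> 'b) \<Rightarrow> 'a fps \<Rightarrow> 'b fps" where
  "fps_map h f = Abs_fps (\<lambda>n. h (fps_nth f n))"

definition strict_weierstrass_factorization :: "'a::comm_ring_1 fps \<Rightarrow> 'a fps \<Rightarrow> 'a poly \<Rightarrow> bool" where
  "strict_weierstrass_factorization x u q \<longleftrightarrow>
     u dvd 1 \<and> lead_coeff q = 1 \<and> x = u * fps_of_poly q \<and> (\<exists>n. fps_of_poly q dvd fps_X ^ n)"

definition has_strict_weierstrass_factorization :: "'a::comm_ring_1 fps \<Rightarrow> bool" where
  "has_strict_weierstrass_factorization x \<longleftrightarrow> (\<exists>u q. strict_weierstrass_factorization x u q)"

text \<open>A = R[[t]]/(x) (elements represented by power series
  modulo x), B = R'[[t]]/(x') with x' = fps_map h x.  The canonical R-bilinear map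
  A \<times> R' \<rightarrow> B is  ([f], r) \<mapsto> [r \<cdot> h(f)].  The canonical map A \<otimes>_R R' \<rightarrow> B is an
  isomorphism iff this bilinear map has the universal property of the tensor product:
  for every R-module M (with scalar multiplication s) and every R-bilinear map
  g : A \<times> R' \<rightarrow> M there is a unique R-linear map \<phi> : B \<rightarrow> M with
  \<phi>([r \<cdot> h(f)]) = g([f], r).  Maps out of quotients are represented by maps on
  representatives that are constant on residue classes.\<close>

definition R_bilinear_on_quot ::
  "('a::comm_ring_1 \<Rightarrow> 'b::comm_ring_1) \<Rightarrow> 'a fps \<Rightarrow> ('a \<Rightarrow> 'm::ab_group_add \<Rightarrow> 'm)
    \<Rightarrow> ('a fps \<Rightarrow> 'b \<Rightarrow> 'm) \<Rightarrow> bool" where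
  "R_bilinear_on_quot h x s g \<longleftrightarrow>
     (\<forall>f f' r. x dvd (f - f') \<longrightarrow> g f r = g f' r) \<and>
     (\<forall>f f' r. g (f + f') r = g f r + g f' r) \<and>
     (\<forall>f r r'. g f (r + r') = g f r + g f r') \<and>
     (\<forall>c f r. g (fps_const c * f) r = s c (g f r)) \<and>
     (\<forall>c f r. g f (h c * r) = s c (g f r))"

definition R_linear_on_quot ::
  "('a::comm_ring_1 \<Rightarrow> 'b::comm_ring_1) \<Rightarrow> 'b fps \<Rightarrow> ('a \<Rightarrow> 'm::ab_group_add \<Rightarrow> 'm)
    \<Rightarrow> ('b fps \<Rightarrow> 'm) \<Rightarrow> bool" where
  "R_linear_on_quot h x' s \<phi> \<longleftrightarrow>
     (\<forall>g g'. x' dvd (g - g') \<longrightarrow> \<phi> g = \<phi> g') \<and>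
     (\<forall>g g'. \<phi> (g + g') = \<phi> g + \<phi> g') \<and>
     (\<forall>c g. \<phi> (fps_const (h c) * g) = s c (\<phi> g))"

definition canonical_base_change_iso :: "('a::comm_ring_1 \<Rightarrow> 'b::comm_ring_1) \<Rightarrow> 'a fps
    \<Rightarrow> ('a \<Rightarrow> 'm::ab_group_add \<Rightarrow> 'm) \<Rightarrow> bool" where
  "canonical_base_change_iso h x s \<longleftrightarrow>
     (\<forall>g. R_bilinear_on_quot h x s g \<longrightarrow>
        (\<exists>!\<phi>. R_linear_on_quot h (fps_map h x) s \<phi> \<and>
               (\<forall>f r. \<phi> (fps_const r * fps_map h f) = g f r)))"

end

theory Submission
  imports Defs
begin

text \<open>Because the unit u can be cancelled, x divides q and hence some power t^N; this is all that
  is used of the factorization. Modulo t^N every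
  power series is an R-linear combination of 1, t, ..., t^(N-1), so an R-bilinear map g on
  R[[t]]/(x) \<times> R' is determined by the values g(t^i, r), and the only candidate for the induced
  map on R'[[t]]/(x) is G \<mapsto> \<Sum>i<N. g(t^i, G_i). It is well defined because the first N coefficients of
  x H only depend on the first N coefficients of H, which turns x H into a finite combination of
  images of multiples of x, on which g vanishes.\<close>

lemma is_ring_hom_additive: "is_ring_hom h \<Longrightarrow> additive h"
  unfolding is_ring_hom_def by (simp add: additive.intro)

lemma fps_map_nth [simp]: "fps_map h f $ n = h (f $ n)"
  by (simp add: fps_map_def)

lemma fps_map_mult:
  assumes "is_ring_hom h"
  shows "fps_map h (f * g) = fps_map h f * fps_map h g"
proof (rule fps_ext)
  fix n
  have "h (\<Sum>i=0..n. f $ i * g $ (n - i)) = (\<Sum>i=0..n. h (f $ i * g $ (n - i)))"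
    by (rule additive.sum[OF is_ring_hom_additive[OF assms]])
  also have "\<dots> = (\<Sum>i=0..n. h (f $ i) * h (g $ (n - i)))"
    using assms by (simp add: is_ring_hom_def)
  finally show "fps_map h (f * g) $ n = (fps_map h f * fps_map h g) $ n"
    by (simp add: fps_mult_nth)
qed

lemma fps_map_fps_X_power:
  assumes "is_ring_hom h"
  shows "fps_map h (fps_X ^ k) = fps_X ^ k"
  using assms additive.zero[OF is_ring_hom_additive[OF assms]]
  by (intro fps_ext) (simp add: is_ring_hom_def)

lemma fps_map_dvd: "is_ring_hom h \<Longrightarrow> a dvd b \<Longrightarrow> fps_map h a dvd fps_map h b"
  by (auto simp: fps_map_mult elim!: dvdE)

lemma fps_X_power_dvd_diff_fps_cutoff: "fps_X ^ n dvd (f :: 'a::comm_ring_1 fps) - fps_cutoff n f"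
  by (metis fps_shift_cutoff' add_diff_cancel_right' dvd_triv_left)

lemma fps_cutoff_conv_sum:
  "fps_cutoff n (f :: 'a::comm_ring_1 fps) = (\<Sum>i<n. fps_const (f $ i) * fps_X ^ i)"
  by (rule fps_ext) (simp add: fps_sum_nth if_distrib sum.delta cong: if_cong)

lemma strict_weierstrass_factorization_dvd_fps_X_power:
  assumes "strict_weierstrass_factorization x u q"
  obtains N where "x dvd fps_X ^ N"
proof -
  from assms obtain N where u: "u dvd 1" and x: "x = u * fps_of_poly q"
    and q: "fps_of_poly q dvd fps_X ^ N"
    unfolding strict_weierstrass_factorization_def by blast
  from u obtain v where "1 = u * v"
    by (elim dvdE)
  with x have "fps_of_poly q = x * v"
    by (metis mult.left_commute mult.right_neutral)
  then have "x dvd fps_of_poly q"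
    by simp
  with q that show ?thesis
    using dvd_trans by blast
qed

lemma R_bilinear_on_quot_additive_left:
  "R_bilinear_on_quot h x s g \<Longrightarrow> additive (\<lambda>f. g f r)"
  unfolding R_bilinear_on_quot_def by (simp add: additive.intro)

lemma R_bilinear_on_quot_additive_right:
  "R_bilinear_on_quot h x s g \<Longrightarrow> additive (g f)"
  unfolding R_bilinear_on_quot_def by (simp add: additive.intro)

lemma R_linear_on_quot_additive: "R_linear_on_quot h x' s \<phi> \<Longrightarrow> additive \<phi>"
  unfolding R_linear_on_quot_def by (simp add: additive.intro)

definition base_change_lift ::
    "('a::comm_ring_1 fps \<Rightarrow> 'b \<Rightarrow> 'm::ab_group_add) \<Rightarrow> nat \<Rightarrow> 'b fps \<Rightarrow> 'm" where
  "base_change_lift g N G = (\<Sum>i<N. g (fps_X ^ i) (G $ i))"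

context
  fixes h :: "'a::comm_ring_1 \<Rightarrow> 'b::comm_ring_1" and x :: "'a fps"
    and s :: "'a \<Rightarrow> 'm::ab_group_add \<Rightarrow> 'm" and g :: "'a fps \<Rightarrow> 'b \<Rightarrow> 'm" and N :: nat
  assumes hom: "is_ring_hom h" and module: "module s" and bilinear: "R_bilinear_on_quot h x s g"
    and dvd_X_power: "x dvd fps_X ^ N"
begin

interpretation g_left: additive "\<lambda>f. g f r" for r
  using bilinear by (rule R_bilinear_on_quot_additive_left)

interpretation g_right: additive "g f" for f
  using bilinear by (rule R_bilinear_on_quot_additive_right)

interpretation lift: additive "base_change_lift g N"
  by unfold_locales (simp add: base_change_lift_def g_right.add sum.distrib)

lemma base_change_lift_fps_map: "base_change_lift g N (fps_const r * fps_map h f) = g f r"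
proof -
  have scale: "g (fps_const c * f) r = s c (g f r)" "g f (h c * r) = s c (g f r)" for c f r
    using bilinear unfolding R_bilinear_on_quot_def by blast+
  have "base_change_lift g N (fps_const r * fps_map h f) = (\<Sum>i<N. g (fps_X ^ i) (h (f $ i) * r))"
    by (simp add: base_change_lift_def mult.commute)
  also have "\<dots> = g (fps_cutoff N f) r"
    by (simp add: scale fps_cutoff_conv_sum g_left.sum)
  also have "\<dots> = g f r"
    using bilinear dvd_trans[OF dvd_X_power fps_X_power_dvd_diff_fps_cutoff, of f]
    unfolding R_bilinear_on_quot_def by metis
  finally show ?thesis .
qed

lemma base_change_lift_fps_map_mult_eq_0: "base_change_lift g N (fps_map h x * H) = 0"
proof -
  have "base_change_lift g N (fps_map h x * H)
      = base_change_lift g N (fps_map h x * fps_cutoff N H)"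
    unfolding base_change_lift_def by (simp add: fps_cutoff_right_mult_nth)
  also have "fps_map h x * fps_cutoff N H
      = (\<Sum>k<N. fps_const (H $ k) * fps_map h (x * fps_X ^ k))"
    by (simp add: fps_cutoff_conv_sum sum_distrib_left fps_map_mult[OF hom]
        fps_map_fps_X_power[OF hom] algebra_simps)
  also have "base_change_lift g N \<dots> = (\<Sum>k<N. g (x * fps_X ^ k) (H $ k))"
    by (simp add: lift.sum base_change_lift_fps_map)
  also have "\<dots> = (\<Sum>k<N. g 0 (H $ k))"
    using bilinear unfolding R_bilinear_on_quot_def by (intro sum.cong refl) simp
  finally show ?thesis
    by (simp add: g_left.zero)
qed

lemma R_linear_on_quot_base_change_lift: "R_linear_on_quot h (fps_map h x) s (base_change_lift g N)"
proof -
  have scale: "g f (h c * r) = s c (g f r)" for c f r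
    using bilinear unfolding R_bilinear_on_quot_def by blast
  have "base_change_lift g N G = base_change_lift g N G'" if "fps_map h x dvd G - G'" for G G'
  proof -
    from that obtain H where "G - G' = fps_map h x * H"
      by (elim dvdE)
    then have "base_change_lift g N G - base_change_lift g N G' = 0"
      by (simp add: lift.diff [symmetric] base_change_lift_fps_map_mult_eq_0)
    then show ?thesis
      by simp
  qed
  moreover have "base_change_lift g N (fps_const (h c) * G) = s c (base_change_lift g N G)" for c G
    by (simp add: base_change_lift_def scale module.scale_sum_right[OF module])
  ultimately show ?thesis
    unfolding R_linear_on_quot_def by (simp add: lift.add)
qed

lemma R_linear_on_quot_eq_base_change_lift:
  assumes linear: "R_linear_on_quot h (fps_map h x) s \<phi>"
    and lifts: "\<And>f r. \<phi> (fps_const r * fps_map h f) = g f r"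
  shows "\<phi> = base_change_lift g N"
proof
  fix G
  interpret \<phi>: additive \<phi>
    using linear by (rule R_linear_on_quot_additive)
  have "fps_map h x dvd fps_X ^ N"
    using fps_map_dvd[OF hom dvd_X_power] by (simp add: fps_map_fps_X_power[OF hom])
  then have "\<phi> G = \<phi> (fps_cutoff N G)"
    using linear dvd_trans[OF _ fps_X_power_dvd_diff_fps_cutoff]
    unfolding R_linear_on_quot_def by blast
  also have "\<dots> = (\<Sum>i<N. \<phi> (fps_const (G $ i) * fps_map h (fps_X ^ i)))"
    by (simp add: fps_cutoff_conv_sum \<phi>.sum fps_map_fps_X_power[OF hom])
  finally show "\<phi> G = base_change_lift g N G"
    by (simp add: lifts base_change_lift_def)
qed

end

lemma canonical_base_change_iso_if_dvd_fps_X_power: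
  assumes "is_ring_hom h" and "module s" and "x dvd fps_X ^ N"
  shows "canonical_base_change_iso h x s"
  unfolding canonical_base_change_iso_def
proof (intro allI impI)
  fix g assume bilinear: "R_bilinear_on_quot h x s g"
  show "\<exists>!\<phi>. R_linear_on_quot h (fps_map h x) s \<phi> \<and> (\<forall>f r. \<phi> (fps_const r * fps_map h f) = g f r)"
    using R_linear_on_quot_base_change_lift[OF assms(1,2) bilinear assms(3)]
      base_change_lift_fps_map[OF assms(1,2) bilinear assms(3)]
      R_linear_on_quot_eq_base_change_lift[OF assms(1,2) bilinear assms(3)]
    by (intro ex1I[of _ "base_change_lift g N"]) blast+
qed

theorem corollary3p4:
  fixes h :: "'a::comm_ring_1 \<Rightarrow> 'b::comm_ring_1"
    and x :: "'a fps"
    and s :: "'a \<Rightarrow> 'm::ab_group_add \<Rightarrow> 'm"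
  assumes "is_ring_hom h"
    and "has_strict_weierstrass_factorization x"
    and "module s"
  shows "canonical_base_change_iso h x s"
proof -
  from assms(2) obtain u q where "strict_weierstrass_factorization x u q"
    unfolding has_strict_weierstrass_factorization_def by blast
  then obtain N where "x dvd fps_X ^ N"
    by (rule strict_weierstrass_factorization_dvd_fps_X_power)
  with assms(1,3) show ?thesis
    by (rule canonical_base_change_iso_if_dvd_fps_X_power)
qed

end
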